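(* Let $T=(V,E,\gamma,\mathrm{p})$ be a fault tree. Then the output of Algorithm $\mathtt{SFPA}$ (described in the context) on input $T$ equals the unreliability $U(T)$.
   Context: A fault tree (FT) is a tuple $T=(V,E,\gamma,\mathrm{p})$ where $(V,E)$ is a rooted directed acyclic graph (edges point from a node to its children; the root is denoted $R_T$), $\gamma\colon V\to\{\mathtt{OR},\mathtt{AND},\mathtt{BE}\}$ satisfies $\gamma(v)=\mathtt{BE}$ iff $v$ is a leaf, and $\mathrm{p}\colon \mathrm{BE}(T)\to[0,1]$ with $\mathrm{BE}(T)=\{v\in V\mid \gamma(v)=\mathtt{BE}\}$. Let $\mathrm{ch}(v)$ be the set of children of $v$. For $\vec f\in\{0,1\}^{\mathrm{BE}(T)}$ the structure function is defined recursively by $S_T(v,\vec f)=f_v$ if $\gamma(v)=\mathtt{BE}$, $S_T(v,\vec f)=\bigvee_{w\in\mathrm{ch}(v)}S_T(w,\vec f)$ if $\gamma(v)=\mathtt{OR}$, and $S_T(v,\vec f)=\bigwedge_{w\in\mathrm{ch}(v)}S_T(w,\vec f)$ if $\gamma(v)=\mathtt{AND}$. Let $\vec F$ be a random vector in $\{0,1\}^{\mathrm{BE}(T)}$ with independent coordinates and $\mathbb P(F_v=1)=\mathrm{p}(v)$. The unreliability is $U(T)=\mathbb P(S_T(R_T,\vec F)=1)$. Order and dominators: write $x\preceq y$ iff there is a directed path (possibly of length $0$) from $y$ to $x$, and $x\prec y$ iff $x\preceq y$ and $x\neq y$. A node $w$ dominates $v$ if $v\prec w$ and every directed path from $R_T$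 to $v$ contains $w$. For every $v\neq R_T$ there is a unique dominator $\mathrm{id}(v)$ of $v$ (the immediate dominator) such that $\mathrm{id}(v)\preceq w'$ for every dominator $w'$ of $v$. Squarefree polynomial algebra: for a finite set $X$, $\mathcal A(X)$ is the real algebra of formal sums $\alpha=\sum_{Y\subseteq X}\alpha_Y\prod_{x\in Y}\mathsf F_x$ ($\alpha_Y\in\mathbb R$, $\mathsf F_x$ formal variables), with addition and multiplication as for polynomials subject to $\mathsf F_x^2=\mathsf F_x$, i.e. $(\alpha+\beta)_Y=\alpha_Y+\beta_Y$ and $(\alpha\beta)_Y=\sum_{Y',Y''\subseteq X,\,Y'\cup Y''=Y}\alpha_{Y'}\beta_{Y''}$. If $X\subseteq X'$, elements of $\mathcal A(X)$ are regarded as elements of $\mathcal A(X')$ (coefficients $0$ outside $X$); $\mathcal A(\varnothing)=\mathbb R$. For finite sets $X,Y$, $x\in X\setminus Y$, $\alpha\in\mathcal A(X)$, $\beta\in\mathcal A(Y)$, the substitution $\alpha[\mathsf F_x\mapsto\beta]\in\mathcal A((X\setminus\{x\})\cup Y)$ is $\beta\cdot\sum_{Z\subseteq X,\,x\in Z}\alpha_Z\prod_{x'\in Z\setminus\{x\}}\mathsf F_{x'}+\sum_{Z\subseteq X,\,x\notin Z}\alpha_Z\prod_{x'\in Z}\mathsf F_{x'}$, computed in $\mathcal A((X\setminus\{x\})\cup Y)$. Algorithm $\mathtt{SFPA}(T)$: set $\mathsf{ToDo}\leftarrow V$. While $\mathsf{ToDo}\neq\varnothing$: pick $v\in\mathsf{ToDo}$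 minimal w.r.t. $\preceq$ and remove it from $\mathsf{ToDo}$. If $\gamma(v)=\mathtt{BE}$, set $g_v\leftarrow\mathrm{p}(v)$. Otherwise set $g_v\leftarrow 1-\prod_{w\in\mathrm{ch}(v)}(1-\mathsf F_w)$ if $\gamma(v)=\mathtt{OR}$, and $g_v\leftarrow\prod_{w\in\mathrm{ch}(v)}\mathsf F_w$ if $\gamma(v)=\mathtt{AND}$ (variables indexed by nodes); then set $\mathsf{ToDo}_v\leftarrow\{w\in V\mid \mathrm{id}(w)=v\}$ and, while $\mathsf{ToDo}_v\neq\varnothing$, pick $w\in\mathsf{ToDo}_v$ maximal w.r.t. $\preceq$, remove it from $\mathsf{ToDo}_v$, and set $g_v\leftarrow g_v[\mathsf F_w\mapsto g_w]$. Finally return $g_{R_T}$. *)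

theory Defs
  imports "HOL-Probability.Probability"
begin

datatype gate = OR | AND | BE

text \<open>A fault tree is given by a node set V, an edge set E (edges point from a node
  to its children), a root R, a type map gam and a probability map p.\<close>

definition ch :: "('v \<times> 'v) set \<Rightarrow> 'v \<Rightarrow> 'v set" where
  "ch E v = {w. (v, w) \<in> E}"

definition fault_tree ::
  "'v set \<Rightarrow> ('v \<times> 'v) set \<Rightarrow> 'v \<Rightarrow> ('v \<Rightarrow> gate) \<Rightarrow> ('v \<Rightarrow> real) \<Rightarrow> bool" where
  "fault_tree V E R gam p \<longleftrightarrow>
     finite V \<and> E \<subseteq> V \<times> V \<and> acyclic E \<and> R \<in> V \<and>
     (\<forall>v\<in>V. (R, v) \<in> E\<^sup>*) \<and>
     (\<forall>v\<in>V. gam v = BE \<longleftrightarrow> ch E v = {}) \<and>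
     (\<forall>v\<in>V. gam v = BE \<longrightarrow> 0 \<le> p v \<and> p v \<le> 1)"

definition BEs :: "'v set \<Rightarrow> ('v \<Rightarrow> gate) \<Rightarrow> 'v set" where
  "BEs V gam = {v\<in>V. gam v = BE}"

text \<open>Structure function: sfun E gam f v holds iff S_T(v,f) = 1 (least solution of the
  defining recursion; on a finite DAG it is the unique solution).\<close>

inductive sfun :: "('v \<times> 'v) set \<Rightarrow> ('v \<Rightarrow> gate) \<Rightarrow> ('v \<Rightarrow> bool) \<Rightarrow> 'v \<Rightarrow> bool"
  for E gam f where
  sfun_BE:  "gam v = BE \<Longrightarrow> f v \<Longrightarrow> sfun E gam f v"
| sfun_OR:  "gam v = OR \<Longrightarrow> (v, w) \<in> E \<Longrightarrow> sfun E gam f w \<Longrightarrow> sfun E gam f v"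
| sfun_AND: "gam v = AND \<Longrightarrow> (\<forall>w. (v, w) \<in> E \<longrightarrow> sfun E gam f w) \<Longrightarrow> sfun E gam f v"

definition unreliability ::
  "'v set \<Rightarrow> ('v \<times> 'v) set \<Rightarrow> 'v \<Rightarrow> ('v \<Rightarrow> gate) \<Rightarrow> ('v \<Rightarrow> real) \<Rightarrow> real" where
  "unreliability V E R gam p =
     measure_pmf.prob (Pi_pmf (BEs V gam) False (\<lambda>v. bernoulli_pmf (p v)))
       {f. sfun E gam f R}"

text \<open>leq E x y means x \<preceq> y: a directed path (possibly of length 0) from y to x.\<close>
definition leq :: "('v \<times> 'v) set \<Rightarrow> 'v \<Rightarrow> 'v \<Rightarrow> bool" where
  "leq E x y \<longleftrightarrow> (y, x) \<in> E\<^sup>*"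

definition less :: "('v \<times> 'v) set \<Rightarrow> 'v \<Rightarrow> 'v \<Rightarrow> bool" where
  "less E x y \<longleftrightarrow> leq E x y \<and> x \<noteq> y"

definition is_path :: "('v \<times> 'v) set \<Rightarrow> 'v list \<Rightarrow> bool" where
  "is_path E xs \<longleftrightarrow> xs \<noteq> [] \<and> (\<forall>i. Suc i < length xs \<longrightarrow> (xs ! i, xs ! Suc i) \<in> E)"

definition dominates :: "('v \<times> 'v) set \<Rightarrow> 'v \<Rightarrow> 'v \<Rightarrow> 'v \<Rightarrow> bool" where
  "dominates E R w v \<longleftrightarrow> less E v w \<and>
     (\<forall>xs. is_path E xs \<and> hd xs = R \<and> last xs = v \<longrightarrow> w \<in> set xs)"

text \<open>is_idom E R v w: v is the immediate dominator of w, i.e. id(w) = v.\<close>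
definition is_idom :: "('v \<times> 'v) set \<Rightarrow> 'v \<Rightarrow> 'v \<Rightarrow> 'v \<Rightarrow> bool" where
  "is_idom E R v w \<longleftrightarrow> dominates E R v w \<and> (\<forall>w'. dominates E R w' w \<longrightarrow> leq E v w')"

text \<open>An element is represented by its coefficient function Y \<mapsto> alpha_Y.\<close>
type_synonym 'v sfp = "'v set \<Rightarrow> real"

definition sfp_const :: "real \<Rightarrow> 'v sfp" where
  "sfp_const c = (\<lambda>Y. if Y = {} then c else 0)"

definition sfp_var :: "'v \<Rightarrow> 'v sfp" where
  "sfp_var x = (\<lambda>Y. if Y = {x} then 1 else 0)"

definition sfp_add :: "'v sfp \<Rightarrow> 'v sfp \<Rightarrow> 'v sfp" where
  "sfp_add a b = (\<lambda>Y. a Y + b Y)"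

definition sfp_minus :: "'v sfp \<Rightarrow> 'v sfp \<Rightarrow> 'v sfp" where
  "sfp_minus a b = (\<lambda>Y. a Y - b Y)"

definition sfp_mult :: "'v sfp \<Rightarrow> 'v sfp \<Rightarrow> 'v sfp" where
  "sfp_mult a b = (\<lambda>Y. \<Sum>(Y', Y'') \<in> {(Y', Y''). Y' \<subseteq> Y \<and> Y'' \<subseteq> Y \<and> Y' \<union> Y'' = Y}.
                        a Y' * b Y'')"

definition sfp_prod :: "('i \<Rightarrow> 'v sfp) \<Rightarrow> 'i set \<Rightarrow> 'v sfp" where
  "sfp_prod f A = Finite_Set.fold (\<lambda>w acc. sfp_mult (f w) acc) (sfp_const 1) A"

definition sfp_subst :: "'v sfp \<Rightarrow> 'v \<Rightarrow> 'v sfp \<Rightarrow> 'v sfp" where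
  "sfp_subst a x b =
     sfp_add (sfp_mult b (\<lambda>Z. if x \<notin> Z then a (insert x Z) else 0))
             (\<lambda>Z. if x \<notin> Z then a Z else 0)"

text \<open>An execution is determined by the order vs in which the outer loop picks nodes and
  the order ws v in which the inner loop for v picks the elements of ToDo_v.\<close>

definition sfpa_outer_ok :: "'v set \<Rightarrow> ('v \<times> 'v) set \<Rightarrow> 'v list \<Rightarrow> bool" where
  "sfpa_outer_ok V E vs \<longleftrightarrow> distinct vs \<and> set vs = V \<and>
     (\<forall>i < length vs. \<forall>u \<in> set (drop i vs). \<not> less E u (vs ! i))"

definition sfpa_inner_ok ::
  "'v set \<Rightarrow> ('v \<times> 'v) set \<Rightarrow> 'v \<Rightarrow> ('v \<Rightarrow> 'v list) \<Rightarrow> bool" where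
  "sfpa_inner_ok V E R ws \<longleftrightarrow> (\<forall>v\<in>V. distinct (ws v) \<and>
     set (ws v) = {w\<in>V. is_idom E R v w} \<and>
     (\<forall>j < length (ws v). \<forall>u \<in> set (drop j (ws v)). \<not> less E (ws v ! j) u))"

definition sfpa_init :: "('v \<times> 'v) set \<Rightarrow> ('v \<Rightarrow> gate) \<Rightarrow> 'v \<Rightarrow> 'v sfp" where
  "sfpa_init E gam v =
     (if gam v = OR
      then sfp_minus (sfp_const 1)
             (sfp_prod (\<lambda>w. sfp_minus (sfp_const 1) (sfp_var w)) (ch E v))
      else sfp_prod sfp_var (ch E v))"

definition sfpa_step ::
  "('v \<times> 'v) set \<Rightarrow> ('v \<Rightarrow> gate) \<Rightarrow> ('v \<Rightarrow> real) \<Rightarrow> ('v \<Rightarrow> 'v list)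
     \<Rightarrow> ('v \<Rightarrow> 'v sfp) \<Rightarrow> 'v \<Rightarrow> 'v sfp" where
  "sfpa_step E gam p ws g v =
     (if gam v = BE then sfp_const (p v)
      else foldl (\<lambda>a w. sfp_subst a w (g w)) (sfpa_init E gam v) (ws v))"

definition sfpa_run ::
  "('v \<times> 'v) set \<Rightarrow> ('v \<Rightarrow> gate) \<Rightarrow> ('v \<Rightarrow> real) \<Rightarrow> ('v \<Rightarrow> 'v list)
     \<Rightarrow> 'v list \<Rightarrow> 'v \<Rightarrow> 'v sfp" where
  "sfpa_run E gam p ws vs =
     foldl (\<lambda>g v. g(v := sfpa_step E gam p ws g v)) (\<lambda>_. sfp_const 0) vs"

end

theory Submission
  imports Defs
begin

(* Evaluating a squarefree polynomial at the 0/1 point that is the indicator of a finite set S is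
   multiplicative, and these values determine the polynomial. Under evaluation, the substitution
   F_w := beta becomes beta(S) * alpha(S + w) + (1 - beta(S)) * alpha(S - w).

   Let the region of a node u be u together with the nodes it dominates. SFPA maintains that g_u,
   evaluated at S, is the probability that u fails when the basic events in its region fail
   independently and every other node below u is cut off, failing iff it lies in S. The regions
   of the children of v in the dominator tree are disjoint, the rest of the tree enters the region
   of such a child w only through w, and processing the children from the top down ensures that
   no region already averaged out lies below w. So substituting g_w for F_w in g_v is the law of
   total probability, conditioned on the failure of w; after all children, the region of v is
   averaged out. At the root the region is everything and nothing is cut off, hence g_R is the
   constant U(T). *)

section \<open>Squarefree polynomials at 0/1 points\<close>

definition sfp_eval :: "'v sfp \<Rightarrow> 'v set \<Rightarrow> real" where
  "sfp_eval a S = sum a (Pow S)"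

text \<open>The representation also carries coefficients at infinite sets, which evaluation cannot see.\<close>
definition sfp_finitary :: "'v sfp \<Rightarrow> bool" where
  "sfp_finitary a \<longleftrightarrow> (\<forall>Y. infinite Y \<longrightarrow> a Y = 0)"

lemma sfp_eqI:
  assumes "sfp_finitary a" "sfp_finitary b" and eval: "\<And>S. finite S \<Longrightarrow> sfp_eval a S = sfp_eval b S"
  shows "a = b"
proof
  fix Y
  show "a Y = b Y"
  proof (cases "finite Y")
    case False
    then show ?thesis using assms(1,2) by (simp add: sfp_finitary_def)
  next
    case True
    then show ?thesis
    proof (induction Y rule: finite_psubset_induct)
      case (psubset Y)
      have "sum a (Pow Y - {Y}) = sum b (Pow Y - {Y})"
        by (rule sum.cong) (auto intro!: psubset.IH)
      moreover have "sfp_eval c Y = c Y + sum c (Pow Y - {Y})" for c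
        unfolding sfp_eval_def using psubset.hyps by (simp add: sum.remove[of _ Y])
      ultimately show ?case using eval[OF psubset.hyps] by simp
    qed
  qed
qed

lemma sfp_mult_infinite:
  assumes "infinite Y"
  shows "sfp_mult a b Y = 0"
proof -
  let ?P = "{(Y', Y''). Y' \<subseteq> Y \<and> Y'' \<subseteq> Y \<and> Y' \<union> Y'' = Y}"
  have "Pow Y \<subseteq> snd ` ?P"
    by (auto intro!: image_eqI[where x = "(Y, _)"])
  then have "infinite ?P"
    using assms by (meson finite_Pow_iff finite_imageI finite_subset)
  then show ?thesis unfolding sfp_mult_def by simp
qed

lemma sfp_eval_const: "finite S \<Longrightarrow> sfp_eval (sfp_const c) S = c"
  unfolding sfp_eval_def sfp_const_def by (simp add: sum.delta)

lemma sfp_eval_var: "finite S \<Longrightarrow> sfp_eval (sfp_var x) S = of_bool (x \<in> S)"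
  unfolding sfp_eval_def sfp_var_def by (simp add: sum.delta)

lemma sfp_eval_add: "sfp_eval (sfp_add a b) S = sfp_eval a S + sfp_eval b S"
  unfolding sfp_eval_def sfp_add_def by (simp add: sum.distrib)

lemma sfp_eval_minus: "sfp_eval (sfp_minus a b) S = sfp_eval a S - sfp_eval b S"
  unfolding sfp_eval_def sfp_minus_def by (simp add: sum_subtractf)

lemma sfp_eval_mult:
  assumes "finite S"
  shows "sfp_eval (sfp_mult a b) S = sfp_eval a S * sfp_eval b S"
proof -
  let ?h = "\<lambda>(Y', Y''). a Y' * b Y''"
  have "sfp_eval a S * sfp_eval b S = sum ?h (Pow S \<times> Pow S)"
    unfolding sfp_eval_def by (simp add: sum_product sum.cartesian_product)
  also have "\<dots> = (\<Sum>Y\<in>Pow S. sum ?h {q \<in> Pow S \<times> Pow S. fst q \<union> snd q = Y})"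
    by (rule sum.group[symmetric]) (auto simp: assms)
  also have "\<dots> = sfp_eval (sfp_mult a b) S"
    unfolding sfp_eval_def sfp_mult_def
    by (intro sum.cong refl arg_cong2[where f = sum]) auto
  finally show ?thesis ..
qed

lemma sfp_finitary_const: "sfp_finitary (sfp_const c)"
  unfolding sfp_finitary_def sfp_const_def by auto

lemma sfp_finitary_mult: "sfp_finitary (sfp_mult a b)"
  unfolding sfp_finitary_def by (simp add: sfp_mult_infinite)

lemma sfp_finitary_minus: "sfp_finitary a \<Longrightarrow> sfp_finitary b \<Longrightarrow> sfp_finitary (sfp_minus a b)"
  unfolding sfp_finitary_def sfp_minus_def by auto

lemma sfp_finitary_subst: "sfp_finitary a \<Longrightarrow> sfp_finitary (sfp_subst a x b)"
  unfolding sfp_finitary_def sfp_subst_def sfp_add_def by (auto simp: sfp_mult_infinite)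

lemma sfp_mult_left_commute: "sfp_mult a (sfp_mult b c) = sfp_mult b (sfp_mult a c)"
  by (rule sfp_eqI) (auto simp: sfp_finitary_mult sfp_eval_mult)

lemma sfp_prod_insert:
  assumes "finite A" "x \<notin> A"
  shows "sfp_prod f (insert x A) = sfp_mult (f x) (sfp_prod f A)"
proof -
  interpret comp_fun_commute "\<lambda>w. sfp_mult (f w)"
    by unfold_locales (auto simp: fun_eq_iff sfp_mult_left_commute)
  show ?thesis unfolding sfp_prod_def using assms by simp
qed

lemma sfp_eval_prod:
  assumes "finite A" "finite S"
  shows "sfp_eval (sfp_prod f A) S = (\<Prod>w\<in>A. sfp_eval (f w) S)"
  using assms(1)
proof induction
  case empty
  show ?case by (simp add: sfp_prod_def sfp_eval_const assms(2))
next
  case (insert x A)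
  then show ?case by (simp add: sfp_prod_insert sfp_eval_mult assms(2))
qed

lemma sfp_finitary_prod: "finite A \<Longrightarrow> sfp_finitary (sfp_prod f A)"
proof (induction rule: finite_induct)
  case empty
  show ?case by (simp add: sfp_prod_def sfp_finitary_const)
next
  case (insert x A)
  then show ?case by (simp add: sfp_prod_insert sfp_finitary_mult)
qed

lemma sfp_eval_subst:
  assumes "finite S"
  shows "sfp_eval (sfp_subst a x b) S =
    sfp_eval b S * sfp_eval a (insert x S) + (1 - sfp_eval b S) * sfp_eval a (S - {x})"
proof -
  let ?T = "Pow (S - {x})"
  have restrict: "sfp_eval (\<lambda>Z. if x \<notin> Z then c Z else 0) S = sum c ?T" for c
  proof -
    have "{Z. Z \<subseteq> S \<and> x \<notin> Z} = ?T" by blast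
    then show ?thesis
      unfolding sfp_eval_def using assms by (simp add: sum.inter_filter[symmetric])
  qed
  have "sfp_eval a (insert x S) = sum a (Pow (insert x (S - {x})))"
    by (simp add: sfp_eval_def)
  also have "\<dots> = sum a ?T + sum a (insert x ` ?T)"
    unfolding Pow_insert by (rule sum.union_disjoint) (use assms in auto)
  also have "sum a (insert x ` ?T) = (\<Sum>Y\<in>?T. a (insert x Y))"
    by (rule sum.reindex_cong[where l = "insert x"]) (auto simp: inj_on_def)
  finally have top: "(\<Sum>Y\<in>?T. a (insert x Y)) = sfp_eval a (insert x S) - sfp_eval a (S - {x})"
    by (simp add: sfp_eval_def)
  have "sfp_eval (sfp_subst a x b) S = sfp_eval b S * (\<Sum>Y\<in>?T. a (insert x Y)) + sfp_eval a (S - {x})"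
    unfolding sfp_subst_def sfp_eval_add sfp_eval_mult[OF assms] restrict by (simp add: sfp_eval_def)
  then show ?thesis
    unfolding top by (simp add: algebra_simps)
qed

section \<open>Independent failures of basic events\<close>

definition bernoulli_weight :: "('v \<Rightarrow> real) \<Rightarrow> 'v set \<Rightarrow> 'v set \<Rightarrow> real" where
  "bernoulli_weight p A F = (\<Prod>b\<in>A. if b \<in> F then p b else 1 - p b)"

definition bernoulli_expectation :: "('v \<Rightarrow> real) \<Rightarrow> 'v set \<Rightarrow> ('v set \<Rightarrow> real) \<Rightarrow> real" where
  "bernoulli_expectation p A \<phi> = (\<Sum>F\<in>Pow A. bernoulli_weight p A F * \<phi> F)"

lemma bernoulli_weight_Un:
  assumes "finite A" "finite B" "A \<inter> B = {}" "X \<subseteq> A" "Y \<subseteq> B"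
  shows "bernoulli_weight p (A \<union> B) (X \<union> Y) = bernoulli_weight p A X * bernoulli_weight p B Y"
  unfolding bernoulli_weight_def prod.union_disjoint[OF assms(1-3)]
  using assms(3-5) by (intro arg_cong2[where f = times] prod.cong) auto

lemma bernoulli_expectation_Un:
  assumes "finite A" "finite B" "A \<inter> B = {}"
  shows "bernoulli_expectation p (A \<union> B) \<phi> =
    bernoulli_expectation p A (\<lambda>F1. bernoulli_expectation p B (\<lambda>F2. \<phi> (F1 \<union> F2)))"
proof -
  let ?u = "\<lambda>(X, Y). X \<union> Y"
  have "Pow (A \<union> B) = ?u ` (Pow A \<times> Pow B)"
  proof (intro equalityI subsetI)
    fix F assume "F \<in> Pow (A \<union> B)"
    then show "F \<in> ?u ` (Pow A \<times> Pow B)" by (intro image_eqI[where x = "(F \<inter> A, F \<inter> B)"]) auto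
  qed auto
  moreover have "inj_on ?u (Pow A \<times> Pow B)"
  proof (rule inj_onI, clarify)
    fix X Y X' Y' assume "X \<subseteq> A" "Y \<subseteq> B" "X' \<subseteq> A" "Y' \<subseteq> B" "X \<union> Y = X' \<union> Y'"
    then have "X = (X' \<union> Y') \<inter> A" "Y = (X' \<union> Y') \<inter> B" "X' = (X' \<union> Y') \<inter> A" "Y' = (X' \<union> Y') \<inter> B"
      using assms(3) by blast+
    then show "X = X' \<and> Y = Y'" by simp
  qed
  ultimately have "bernoulli_expectation p (A \<union> B) \<phi> =
      (\<Sum>(X, Y)\<in>Pow A \<times> Pow B. bernoulli_weight p (A \<union> B) (X \<union> Y) * \<phi> (X \<union> Y))"
    unfolding bernoulli_expectation_def by (simp add: sum.reindex case_prod_unfold)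
  also have "\<dots> = (\<Sum>(X, Y)\<in>Pow A \<times> Pow B.
      bernoulli_weight p A X * (bernoulli_weight p B Y * \<phi> (X \<union> Y)))"
    using assms by (intro sum.cong) (auto simp: bernoulli_weight_Un)
  finally show ?thesis
    unfolding bernoulli_expectation_def
    by (simp add: sum.cartesian_product[symmetric] sum_distrib_left)
qed

lemma bernoulli_expectation_cong:
  "(\<And>F. F \<subseteq> A \<Longrightarrow> \<phi> F = \<psi> F) \<Longrightarrow> bernoulli_expectation p A \<phi> = bernoulli_expectation p A \<psi>"
  unfolding bernoulli_expectation_def by (rule sum.cong) auto

lemma bernoulli_expectation_const:
  assumes "finite A"
  shows "bernoulli_expectation p A (\<lambda>_. c) = c"
  using assms
proof (induction A rule: finite_induct)
  case empty
  show ?case by (simp add: bernoulli_expectation_def bernoulli_weight_def)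
next
  case (insert a A)
  have "bernoulli_expectation p {a} (\<lambda>_. c) = c"
    by (simp add: bernoulli_expectation_def bernoulli_weight_def Pow_insert algebra_simps)
  then show ?case
    using bernoulli_expectation_Un[of A "{a}" p "\<lambda>_. c"] insert by simp
qed

lemma bernoulli_expectation_linear:
  "bernoulli_expectation p A (\<lambda>F. x * \<phi> F + y * \<psi> F) =
    x * bernoulli_expectation p A \<phi> + y * bernoulli_expectation p A \<psi>"
  unfolding bernoulli_expectation_def
  by (simp add: algebra_simps sum.distrib sum_distrib_left)

lemma bernoulli_expectation_if:
  assumes "finite A"
  shows "bernoulli_expectation p A (\<lambda>F. if P F then x else y) =
    bernoulli_expectation p A (\<lambda>F. of_bool (P F)) * x +
    (1 - bernoulli_expectation p A (\<lambda>F. of_bool (P F))) * y"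
proof -
  let ?q = "bernoulli_expectation p A (\<lambda>F. of_bool (P F))"
  have "bernoulli_expectation p A (\<lambda>F. 1 - of_bool (P F)) =
      bernoulli_expectation p A (\<lambda>F. 1 * 1 + (- 1) * of_bool (P F))"
    by simp
  also have "\<dots> = 1 - ?q"
    unfolding bernoulli_expectation_linear bernoulli_expectation_const[OF assms] by simp
  finally have complement: "bernoulli_expectation p A (\<lambda>F. 1 - of_bool (P F)) = 1 - ?q" .
  have "bernoulli_expectation p A (\<lambda>F. if P F then x else y) =
      bernoulli_expectation p A (\<lambda>F. x * of_bool (P F) + y * (1 - of_bool (P F)))"
    by (rule bernoulli_expectation_cong) simp
  then show ?thesis
    unfolding bernoulli_expectation_linear complement by (simp add: algebra_simps)
qed

lemma prob_Pi_bernoulli: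
  assumes "finite A" "\<And>a. a \<in> A \<Longrightarrow> 0 \<le> p a \<and> p a \<le> 1"
  shows "measure_pmf.prob (Pi_pmf A False (\<lambda>a. bernoulli_pmf (p a))) {f. P f} =
    bernoulli_expectation p A (\<lambda>F. of_bool (P (\<lambda>u. u \<in> F)))"
proof -
  let ?M = "Pi_pmf A False (\<lambda>a. bernoulli_pmf (p a))"
  let ?ind = "\<lambda>F u. u \<in> F"
  have support: "set_pmf ?M \<subseteq> ?ind ` Pow A"
  proof
    fix f assume "f \<in> set_pmf ?M"
    then have "\<forall>u. u \<notin> A \<longrightarrow> f u = False"
      using set_Pi_pmf_subset[OF assms(1), of False "\<lambda>a. bernoulli_pmf (p a)"] by blast
    then have "f = ?ind {u \<in> A. f u}"
      by (auto simp: fun_eq_iff)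
    then show "f \<in> ?ind ` Pow A" by blast
  qed
  have pmf_ind: "pmf ?M (?ind F) = bernoulli_weight p A F" if "F \<subseteq> A" for F
  proof -
    have "pmf ?M (?ind F) = (\<Prod>a\<in>A. pmf (bernoulli_pmf (p a)) (a \<in> F))"
      using that by (intro pmf_Pi' assms(1)) blast
    also have "\<dots> = bernoulli_weight p A F"
      unfolding bernoulli_weight_def using assms(2) by (intro prod.cong) auto
    finally show ?thesis .
  qed
  have inj: "inj_on ?ind (Pow A)"
    by (rule inj_onI) (metis Collect_mem_eq)
  have "measure_pmf.prob ?M {f. P f} = (\<integral>f. indicator {f. P f} f \<partial>?M)"
    by simp
  also have "\<dots> = (\<Sum>f\<in>?ind ` Pow A. indicator {f. P f} f * pmf ?M f)"
    using support assms(1) by (intro integral_measure_pmf_real) auto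
  also have "\<dots> = (\<Sum>F\<in>Pow A. of_bool (P (?ind F)) * bernoulli_weight p A F)"
    unfolding sum.reindex[OF inj] by (intro sum.cong) (auto simp: pmf_ind)
  finally show ?thesis
    unfolding bernoulli_expectation_def by (simp add: mult.commute)
qed

section \<open>Structure functions with cut-off nodes\<close>

text \<open>The structure function of the tree in which the nodes of C are cut off and behave like
  basic events; X is the set of failed basic events and cut nodes.\<close>
inductive cut_sfun :: "('v \<times> 'v) set \<Rightarrow> ('v \<Rightarrow> gate) \<Rightarrow> 'v set \<Rightarrow> 'v set \<Rightarrow> 'v \<Rightarrow> bool"
  for E gam C X where
  cut_sfun_cut: "x \<in> C \<Longrightarrow> x \<in> X \<Longrightarrow> cut_sfun E gam C X x"
| cut_sfun_BE: "gam x = BE \<Longrightarrow> x \<in> X \<Longrightarrow> cut_sfun E gam C X x"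
| cut_sfun_OR: "x \<notin> C \<Longrightarrow> gam x = OR \<Longrightarrow> (x, c) \<in> E \<Longrightarrow> cut_sfun E gam C X c \<Longrightarrow> cut_sfun E gam C X x"
| cut_sfun_AND: "x \<notin> C \<Longrightarrow> gam x = AND \<Longrightarrow> (\<forall>c. (x, c) \<in> E \<longrightarrow> cut_sfun E gam C X c) \<Longrightarrow>
    cut_sfun E gam C X x"

lemma cut_sfun_iff:
  "cut_sfun E gam C X x \<longleftrightarrow>
    (if x \<in> C \<or> gam x = BE then x \<in> X
     else if gam x = OR then \<exists>c. (x, c) \<in> E \<and> cut_sfun E gam C X c
     else \<forall>c. (x, c) \<in> E \<longrightarrow> cut_sfun E gam C X c)" (is "_ \<longleftrightarrow> ?rhs")
proof
  assume "cut_sfun E gam C X x"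
  then show "?rhs" by cases auto
next
  assume "?rhs"
  then show "cut_sfun E gam C X x"
    by (cases "gam x") (auto split: if_splits intro: cut_sfun.intros)
qed

lemma sfun_iff_cut_sfun: "sfun E gam f x \<longleftrightarrow> cut_sfun E gam {} {u. f u} x"
proof
  show "sfun E gam f x \<Longrightarrow> cut_sfun E gam {} {u. f u} x"
    by (induction rule: sfun.induct) (auto intro: cut_sfun.intros)
  show "cut_sfun E gam {} {u. f u} x \<Longrightarrow> sfun E gam f x"
    by (induction rule: cut_sfun.induct) (auto intro: sfun.intros)
qed

lemma cut_sfun_local:
  assumes wf: "wf (E\<inverse>)" and "y \<in> N"
    and status: "\<And>x. x \<in> N \<Longrightarrow> x \<notin> K \<Longrightarrow> (x \<in> C1 \<or> gam x = BE) \<longleftrightarrow> (x \<in> C2 \<or> gam x = BE)"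
    and input: "\<And>x. x \<in> N \<Longrightarrow> x \<notin> K \<Longrightarrow> x \<in> C1 \<or> gam x = BE \<Longrightarrow> x \<in> X1 \<longleftrightarrow> x \<in> X2"
    and closed: "\<And>x c. x \<in> N \<Longrightarrow> x \<notin> K \<Longrightarrow> x \<notin> C1 \<Longrightarrow> gam x \<noteq> BE \<Longrightarrow> (x, c) \<in> E \<Longrightarrow> c \<in> N"
    and known: "\<And>x. x \<in> N \<Longrightarrow> x \<in> K \<Longrightarrow> cut_sfun E gam C1 X1 x \<longleftrightarrow> cut_sfun E gam C2 X2 x"
  shows "cut_sfun E gam C1 X1 y \<longleftrightarrow> cut_sfun E gam C2 X2 y"
  using \<open>y \<in> N\<close>
proof (induction y rule: wf_induct_rule[OF wf])
  case (1 y)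
  show ?case
  proof (cases "y \<in> K")
    case True
    then show ?thesis using known 1 by blast
  next
    case False
    show ?thesis
    proof (cases "y \<in> C1 \<or> gam y = BE")
      case True
      then show ?thesis
        using status[OF 1(2) False] input[OF 1(2) False]
        unfolding cut_sfun_iff[of E gam C1 X1 y] cut_sfun_iff[of E gam C2 X2 y] by simp
    next
      case inner: False
      have "cut_sfun E gam C1 X1 c \<longleftrightarrow> cut_sfun E gam C2 X2 c" if "(y, c) \<in> E" for c
        using 1 closed[OF 1(2) False] inner that by blast
      then show ?thesis
        using status[OF 1(2) False] inner
        unfolding cut_sfun_iff[of E gam C1 X1 y] cut_sfun_iff[of E gam C2 X2 y] by auto
    qed
  qed
qed

section \<open>Paths and dominators\<close>

lemma is_path_Cons:
  "is_path E (x # xs) \<longleftrightarrow> xs = [] \<or> (x, hd xs) \<in> E \<and> is_path E xs"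
proof (cases xs)
  case (Cons y ys)
  have "(\<forall>i. Suc i < length (x # xs) \<longrightarrow> ((x # xs) ! i, (x # xs) ! Suc i) \<in> E) \<longleftrightarrow>
    (x, y) \<in> E \<and> (\<forall>i. Suc i < length xs \<longrightarrow> (xs ! i, xs ! Suc i) \<in> E)" (is "?L \<longleftrightarrow> ?R")
  proof
    assume ?L
    then show ?R using Cons by (metis Suc_less_eq length_Cons nth_Cons_0 nth_Cons_Suc zero_less_Suc)
  next
    assume ?R
    then show ?L using Cons by (auto simp: less_Suc_eq_0_disj)
  qed
  then show ?thesis
    using Cons by (simp add: is_path_def)
qed (simp add: is_path_def)

lemma rtrancl_iff_path:
  "(x, y) \<in> A\<^sup>* \<longleftrightarrow> (\<exists>xs. is_path A xs \<and> hd xs = x \<and> last xs = y)"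
proof
  assume "(x, y) \<in> A\<^sup>*"
  then show "\<exists>xs. is_path A xs \<and> hd xs = x \<and> last xs = y"
  proof (induction rule: converse_rtrancl_induct)
    case base
    show ?case by (auto simp: is_path_def intro!: exI[where x = "[y]"])
  next
    case (step x z)
    then obtain xs where "is_path A xs" "hd xs = z" "last xs = y" by blast
    moreover have "xs \<noteq> []"
      using \<open>is_path A xs\<close> by (simp add: is_path_def)
    ultimately show ?case
      using step.hyps(1) by (intro exI[where x = "x # xs"]) (simp add: is_path_Cons)
  qed
next
  assume "\<exists>xs. is_path A xs \<and> hd xs = x \<and> last xs = y"
  then obtain xs where "is_path A xs" "hd xs = x" "last xs = y" by blast
  then show "(x, y) \<in> A\<^sup>*"
  proof (induction xs arbitrary: x)
    case (Cons z xs)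
    then show ?case
      by (cases xs) (auto simp: is_path_Cons intro: converse_rtrancl_into_rtrancl)
  qed (simp add: is_path_def)
qed

definition avoiding :: "('v \<times> 'v) set \<Rightarrow> 'v \<Rightarrow> ('v \<times> 'v) set" where
  "avoiding A w = {(a, b) \<in> A. a \<noteq> w \<and> b \<noteq> w}"

lemma path_avoiding_iff:
  assumes "y \<noteq> w"
  shows "(\<exists>xs. is_path A xs \<and> hd xs = x \<and> last xs = y \<and> w \<notin> set xs) \<longleftrightarrow>
    (x, y) \<in> (avoiding A w)\<^sup>*"
proof -
  have "is_path (avoiding A w) xs \<longleftrightarrow> is_path A xs \<and> w \<notin> set xs" if "last xs = y" for xs
  proof
    assume path: "is_path (avoiding A w) xs"
    have "xs ! i \<noteq> w" if "i < length xs" for i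
    proof (cases "Suc i < length xs")
      case True
      then show ?thesis using path by (auto simp: is_path_def avoiding_def)
    next
      case False
      then have "i = length xs - 1"
        using that by linarith
      then show ?thesis
        using \<open>last xs = y\<close> path assms by (simp add: last_conv_nth is_path_def)
    qed
    then show "is_path A xs \<and> w \<notin> set xs"
      using path by (auto simp: is_path_def avoiding_def in_set_conv_nth)
  next
    assume "is_path A xs \<and> w \<notin> set xs"
    then show "is_path (avoiding A w) xs"
      unfolding is_path_def avoiding_def
      by (metis (mono_tags) Suc_lessD case_prodI mem_Collect_eq nth_mem)
  qed
  then show ?thesis
    unfolding rtrancl_iff_path by blast
qed

lemma rtrancl_avoiding_from_avoided: "(w, y) \<in> (avoiding A w)\<^sup>* \<Longrightarrow> y = w"
  by (erule converse_rtranclE) (simp_all add: avoiding_def)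

lemma rtrancl_through_if_not_avoiding:
  assumes "(x, y) \<in> A\<^sup>*" "(x, y) \<notin> (avoiding A w)\<^sup>*"
  shows "(x, w) \<in> A\<^sup>* \<and> (w, y) \<in> A\<^sup>*"
  using assms
proof (induction rule: rtrancl_induct)
  case (step y z)
  show ?case
  proof (cases "(x, y) \<in> (avoiding A w)\<^sup>*")
    case True
    have "(y, z) \<notin> avoiding A w"
      using step.prems rtrancl_into_rtrancl[OF True] by blast
    then consider "y = w" | "z = w"
      using step.hyps(2) by (auto simp: avoiding_def)
    then show ?thesis
    proof cases
      case 1
      then show ?thesis using step.hyps by simp
    next
      case 2
      then show ?thesis using rtrancl_into_rtrancl[OF step.hyps] by simp
    qed
  next
    case False
    then have "(x, w) \<in> A\<^sup>*" "(w, y) \<in> A\<^sup>*"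
      using step.IH by simp_all
    then show ?thesis
      using rtrancl_into_rtrancl[OF _ step.hyps(2)] by simp
  qed
qed simp

lemma rtrancl_avoiding_if_unreachable:
  assumes "(x, y) \<in> A\<^sup>*" "(x, w) \<notin> A\<^sup>*"
  shows "(x, y) \<in> (avoiding A w)\<^sup>*"
proof (rule ccontr)
  assume "(x, y) \<notin> (avoiding A w)\<^sup>*"
  from conjunct1[OF rtrancl_through_if_not_avoiding[OF assms(1) this]] assms(2) show False
    by contradiction
qed

lemma less_iff_rtrancl: "less E x y \<longleftrightarrow> (y, x) \<in> E\<^sup>* \<and> x \<noteq> y"
  by (simp add: less_def leq_def)

lemma dominates_iff_avoiding:
  "dominates E R w v \<longleftrightarrow> less E v w \<and> (R, v) \<notin> (avoiding E w)\<^sup>*"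
  unfolding dominates_def using path_avoiding_iff[of v w E R] by (auto simp: less_iff_rtrancl)

locale rooted_dag =
  fixes V :: "'v set" and E :: "('v \<times> 'v) set" and R :: 'v
  assumes finite_V: "finite V" and edges: "E \<subseteq> V \<times> V" and acyclic: "acyclic E"
    and root: "R \<in> V" and reach: "v \<in> V \<Longrightarrow> (R, v) \<in> E\<^sup>*"
begin

lemma wf_edges: "wf E" and wf_converse_edges: "wf (E\<inverse>)"
proof -
  have "finite E"
    using edges finite_V by (meson finite_SigmaI finite_subset)
  then show "wf E" "wf (E\<inverse>)"
    using acyclic by (simp_all add: finite_acyclic_wf finite_acyclic_wf_converse)
qed

lemma trancl_in_V: "(x, y) \<in> E\<^sup>+ \<Longrightarrow> x \<in> V \<and> y \<in> V"
  using trancl_subset_Sigma[OF edges] by blast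

lemma rtrancl_antisym: "(x, y) \<in> E\<^sup>* \<Longrightarrow> (y, x) \<in> E\<^sup>* \<Longrightarrow> x = y"
  using acyclic unfolding acyclic_def by (metis rtrancl_eq_or_trancl rtrancl_trancl_trancl)

lemma dominatesD:
  assumes "dominates E R w v"
  shows "(w, v) \<in> E\<^sup>*" "w \<noteq> v" "w \<in> V" "v \<in> V"
proof -
  show "(w, v) \<in> E\<^sup>*" "w \<noteq> v"
    using assms by (auto simp: dominates_iff_avoiding less_iff_rtrancl)
  then show "w \<in> V" "v \<in> V"
    using trancl_in_V by (auto simp: rtrancl_eq_or_trancl)
qed

lemma root_dominates: "u \<in> V \<Longrightarrow> u \<noteq> R \<Longrightarrow> dominates E R R u"
  by (auto simp: dominates_iff_avoiding less_iff_rtrancl reach dest: rtrancl_avoiding_from_avoided)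

lemma dominates_ancestor:
  assumes "dominates E R a u" "(b, u) \<in> E\<^sup>*" "(b, a) \<notin> E\<^sup>*"
  shows "dominates E R a b"
proof -
  have "(R, b) \<notin> (avoiding E a)\<^sup>*"
  proof
    assume "(R, b) \<in> (avoiding E a)\<^sup>*"
    moreover have "(b, u) \<in> (avoiding E a)\<^sup>*"
      using assms(2,3) by (rule rtrancl_avoiding_if_unreachable)
    ultimately have "(R, u) \<in> (avoiding E a)\<^sup>*"
      by (rule rtrancl_trans)
    then show False
      using assms(1) by (auto simp: dominates_iff_avoiding)
  qed
  moreover have "b \<in> V"
    using assms(2) dominatesD(4)[OF assms(1)] trancl_in_V by (metis rtrancl_eq_or_trancl)
  then have "(R, b) \<in> E\<^sup>*"
    by (rule reach)
  ultimately have "(a, b) \<in> E\<^sup>*"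
    using rtrancl_through_if_not_avoiding by (metis (no_types))
  with \<open>(R, b) \<notin> _\<close> assms(3) show ?thesis
    by (auto simp: dominates_iff_avoiding less_iff_rtrancl)
qed

lemma dominates_parent:
  assumes "dominates E R a u" "(b, u) \<in> E"
  shows "(a, b) \<in> E\<^sup>*"
proof (cases "b = a")
  case False
  have "(R, b) \<notin> (avoiding E a)\<^sup>*"
  proof
    assume "(R, b) \<in> (avoiding E a)\<^sup>*"
    moreover have "(b, u) \<in> avoiding E a"
      using assms False dominatesD(2) by (auto simp: avoiding_def)
    ultimately have "(R, u) \<in> (avoiding E a)\<^sup>*" ..
    then show False
      using assms(1) by (auto simp: dominates_iff_avoiding)
  qed
  moreover have "b \<in> V"
    using assms(2) edges by blast
  then have "(R, b) \<in> E\<^sup>*"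
    by (rule reach)
  ultimately show ?thesis
    using rtrancl_through_if_not_avoiding by (metis (no_types))
qed simp

lemma dominates_trans:
  assumes ab: "dominates E R a b" and bc: "dominates E R b c"
  shows "dominates E R a c"
proof -
  have "(a, c) \<in> E\<^sup>*"
    using dominatesD(1)[OF ab] dominatesD(1)[OF bc] by simp
  moreover have "a \<noteq> c"
    using dominatesD(1,2)[OF ab] dominatesD(1)[OF bc] rtrancl_antisym by blast
  moreover have "(R, c) \<notin> (avoiding E a)\<^sup>*"
  proof
    assume "(R, c) \<in> (avoiding E a)\<^sup>*"
    moreover have "avoiding (avoiding E a) b \<subseteq> avoiding E b"
      by (auto simp: avoiding_def)
    then have "(R, c) \<notin> (avoiding (avoiding E a) b)\<^sup>*"
      using bc rtrancl_mono by (auto simp: dominates_iff_avoiding)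
    ultimately have "(R, b) \<in> (avoiding E a)\<^sup>*"
      using rtrancl_through_if_not_avoiding by (metis (no_types))
    then show False
      using ab by (simp add: dominates_iff_avoiding)
  qed
  ultimately show ?thesis
    by (simp add: dominates_iff_avoiding less_iff_rtrancl)
qed

lemma dominators_comparable:
  assumes "dominates E R a u" "dominates E R b u"
  shows "(a, b) \<in> E\<^sup>* \<or> (b, a) \<in> E\<^sup>*"
proof (rule ccontr)
  assume "\<not> ?thesis"
  then have "dominates E R a b"
    using dominates_ancestor[OF assms(1) dominatesD(1)[OF assms(2)]] by blast
  with \<open>\<not> ?thesis\<close> show False
    using dominatesD(1) by blast
qed

definition region :: "'v \<Rightarrow> 'v set" where
  "region w = {u \<in> V. u = w \<or> dominates E R w u}"

lemma region_root: "region R = V"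
  using root_dominates by (auto simp: region_def)

lemma region_descendant: "u \<in> region w \<Longrightarrow> (w, u) \<in> E\<^sup>*"
  by (auto simp: region_def dest: dominatesD(1))

lemma idom_dominates: "is_idom E R v w \<Longrightarrow> dominates E R v w"
  by (simp add: is_idom_def)

lemma idomD: "is_idom E R v w \<Longrightarrow> (v, w) \<in> E\<^sup>* \<and> v \<noteq> w \<and> v \<in> V \<and> w \<in> V"
  using dominatesD[OF idom_dominates] by blast

lemma exists_idom_child_region:
  assumes vu: "dominates E R v u"
  shows "\<exists>z. is_idom E R v z \<and> u \<in> region z"
proof -
  let ?M = "{x. (x = u \<or> dominates E R x u) \<and> less E x v}"
  have "u \<in> ?M"
    using dominatesD(1,2)[OF vu] by (simp add: less_iff_rtrancl)
  \<comment> \<open>the witness is the dominator of u closest to v\<close>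
  from wfE_min[OF wf_trancl[OF wf_edges] this]
  obtain z where zM: "z \<in> ?M" and top: "\<And>y. (y, z) \<in> E\<^sup>+ \<Longrightarrow> y \<notin> ?M"
    by blast
  have zu: "(z, u) \<in> E\<^sup>*"
    using zM dominatesD(1) by auto
  have "(z, v) \<notin> E\<^sup>*"
    using zM rtrancl_antisym by (auto simp: less_iff_rtrancl)
  then have vz: "dominates E R v z"
    by (rule dominates_ancestor[OF vu zu])
  have "leq E v w'" if wz: "dominates E R w' z" for w'
  proof (rule ccontr)
    assume "\<not> leq E v w'"
    have "dominates E R w' u"
      using zM wz dominates_trans by auto
    then have "(v, w') \<in> E\<^sup>*" "w' \<noteq> v"
      using dominators_comparable[OF vu] \<open>\<not> leq E v w'\<close> by (auto simp: leq_def)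
    with \<open>dominates E R w' u\<close> have "w' \<in> ?M"
      by (simp add: less_iff_rtrancl)
    moreover have "(w', z) \<in> E\<^sup>+"
      using dominatesD(1,2)[OF wz] by (simp add: rtrancl_eq_or_trancl)
    ultimately show False
      using top by blast
  qed
  with vz have "is_idom E R v z"
    by (simp add: is_idom_def)
  moreover have "u \<in> region z"
    using zM dominatesD(4)[OF vu] by (auto simp: region_def)
  ultimately show ?thesis by blast
qed

lemma Union_region_idom_children:
  "\<Union> (region ` {w \<in> V. is_idom E R v w}) = {u. dominates E R v u}"
proof
  show "\<Union> (region ` {w \<in> V. is_idom E R v w}) \<subseteq> {u. dominates E R v u}"
    using dominates_trans by (auto simp: region_def dest: idom_dominates)
  show "{u. dominates E R v u} \<subseteq> \<Union> (region ` {w \<in> V. is_idom E R v w})"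
    using exists_idom_child_region idomD by blast
qed

lemma idom_sibling_region_not_below:
  assumes "is_idom E R v w'" "is_idom E R v w" "w' \<noteq> w" "\<not> less E w' w"
    and "u \<in> region w'" "(w, u) \<in> E\<^sup>*"
  shows False
proof -
  have "(w, w') \<notin> E\<^sup>*"
    using assms(3,4) by (simp add: less_iff_rtrancl)
  then have "u \<noteq> w'" "dominates E R w' u"
    using assms(5,6) by (auto simp: region_def)
  then have "dominates E R w' w"
    using dominates_ancestor assms(6) \<open>(w, w') \<notin> E\<^sup>*\<close> by blast
  then have "(w', v) \<in> E\<^sup>*"
    using assms(2) by (simp add: is_idom_def leq_def)
  then show False
    using idomD[OF assms(1)] rtrancl_antisym by blast
qed

end

section \<open>Correctness of SFPA\<close>

lemma prod_of_bool:
  "finite A \<Longrightarrow> (\<Prod>x\<in>A. of_bool (P x)) = (of_bool (\<forall>x\<in>A. P x) :: 'a::comm_semiring_1)"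
  by (induction rule: finite_induct) auto

lemma sorted_wrt_if_nth_drop:
  assumes "\<And>i u. i < length xs \<Longrightarrow> u \<in> set (drop i xs) \<Longrightarrow> P (xs ! i) u"
  shows "sorted_wrt P xs"
  unfolding sorted_wrt_iff_nth_less
proof (intro allI impI)
  fix i j assume "i < j" "j < length xs"
  then have "drop i xs ! (j - i) = xs ! j" "j - i < length (drop i xs)"
    by simp_all
  then have "xs ! j \<in> set (drop i xs)"
    by (metis nth_mem)
  then show "P (xs ! i) (xs ! j)"
    using assms \<open>i < j\<close> \<open>j < length xs\<close> by simp
qed

locale fault_tree_model = rooted_dag V E R for V :: "'v set" and E R +
  fixes gam :: "'v \<Rightarrow> gate" and p :: "'v \<Rightarrow> real"
  assumes leaf_iff: "v \<in> V \<Longrightarrow> gam v = BE \<longleftrightarrow> ch E v = {}"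
    and prob_BE: "v \<in> V \<Longrightarrow> gam v = BE \<Longrightarrow> 0 \<le> p v \<and> p v \<le> 1"
begin

definition below :: "'v \<Rightarrow> 'v set" where
  "below u = {x \<in> V. less E x u}"

text \<open>Evaluated at S, a is the probability that u fails when the basic events in D fail
  independently and every other node below u is cut off, failing iff it lies in S.\<close>
definition represents :: "'v set \<Rightarrow> 'v \<Rightarrow> 'v sfp \<Rightarrow> bool" where
  "represents D u a \<longleftrightarrow> sfp_finitary a \<and> (\<forall>S. finite S \<longrightarrow>
     sfp_eval a S = bernoulli_expectation p (D \<inter> BEs V gam)
       (\<lambda>F. of_bool (cut_sfun E gam (below u - D) (S \<inter> (below u - D) \<union> F) u)))"

lemma finite_BEs: "finite (D \<inter> BEs V gam)"
  using finite_V by (simp add: BEs_def)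

lemma BE_no_descendants:
  assumes "v \<in> V" "gam v = BE" "(v, u) \<in> E\<^sup>*"
  shows "u = v"
  using assms(3)
proof (cases rule: converse_rtranclE)
  case (step c)
  then show ?thesis using leaf_iff[OF assms(1)] assms(2) by (auto simp: ch_def)
qed simp

lemma represents_BE:
  assumes "v \<in> V" "gam v = BE"
  shows "represents (region v) v (sfp_const (p v))"
proof -
  have "region v = {v}" "below v = {}"
    using BE_no_descendants[OF assms] dominatesD(1,2) assms(1)
    by (auto simp: region_def below_def less_iff_rtrancl)
  moreover have "{v} \<inter> BEs V gam = {v}"
    using assms by (simp add: BEs_def)
  moreover have "cut_sfun E gam {} F v \<longleftrightarrow> v \<in> F" for F
    using assms(2) by (simp add: cut_sfun_iff)
  ultimately show ?thesis
    by (simp add: represents_def sfp_finitary_const sfp_eval_const bernoulli_expectation_def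
        bernoulli_weight_def Pow_insert)
qed

lemma represents_init:
  assumes "v \<in> V" "gam v \<noteq> BE"
  shows "represents {} v (sfpa_init E gam v)"
proof -
  have children: "ch E v \<subseteq> below v"
    using edges acyclic by (auto simp: ch_def below_def less_iff_rtrancl acyclic_def)
  then have "finite (ch E v)"
    by (rule finite_subset) (simp add: below_def finite_V)
  have v: "v \<notin> below v"
    by (simp add: below_def less_iff_rtrancl)
  have "sfp_eval (sfpa_init E gam v) S = of_bool (cut_sfun E gam (below v) (S \<inter> below v) v)"
    if "finite S" for S
  proof -
    have "cut_sfun E gam (below v) (S \<inter> below v) c \<longleftrightarrow> c \<in> S" if "c \<in> ch E v" for c
      using children that by (subst cut_sfun_iff) auto
    then have "cut_sfun E gam (below v) (S \<inter> below v) v \<longleftrightarrow>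
        (if gam v = OR then \<exists>c\<in>ch E v. c \<in> S else \<forall>c\<in>ch E v. c \<in> S)"
      using v assms(2) by (subst cut_sfun_iff) (auto simp: ch_def)
    then show ?thesis
      using \<open>finite (ch E v)\<close> \<open>finite S\<close>
      by (simp add: sfpa_init_def sfp_eval_minus sfp_eval_const sfp_eval_prod sfp_eval_var
          of_bool_not_iff[symmetric] prod_of_bool)
  qed
  moreover have "sfp_finitary (sfpa_init E gam v)"
    using \<open>finite (ch E v)\<close>
    by (simp add: sfpa_init_def sfp_finitary_minus sfp_finitary_const sfp_finitary_prod)
  ultimately show ?thesis
    by (simp add: represents_def bernoulli_expectation_def bernoulli_weight_def)
qed

context
  fixes v w :: 'v and D :: "'v set"
  assumes idom: "is_idom E R v w" and fresh: "\<And>u. (w, u) \<in> E\<^sup>* \<Longrightarrow> u \<notin> D"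
begin

lemma descendant_of_idom_child_cut:
  assumes "(w, x) \<in> E\<^sup>*" "x \<in> V"
  shows "x \<in> below v - D"
proof -
  have "(v, x) \<in> E\<^sup>*" "x \<noteq> v"
    using idomD[OF idom] assms(1) rtrancl_antisym by (auto intro: rtrancl_trans)
  then show ?thesis
    using assms fresh by (simp add: below_def less_iff_rtrancl)
qed

lemma cut_sfun_at_idom_child:
  assumes "F1 \<subseteq> D" "F2 \<subseteq> region w"
  shows "cut_sfun E gam (below v - D - region w) (S \<inter> (below v - D - region w) \<union> (F1 \<union> F2)) w \<longleftrightarrow>
    cut_sfun E gam (below w - region w) (S \<inter> (below w - region w) \<union> F2) w"
proof (rule cut_sfun_local[where N = "{x \<in> V. (w, x) \<in> E\<^sup>*}" and K = "{}", OF wf_converse_edges])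
  have cut_iff: "x \<in> below v - D - region w \<longleftrightarrow> x \<notin> region w"
    "x \<in> below w - region w \<longleftrightarrow> x \<notin> region w" if "x \<in> V" "(w, x) \<in> E\<^sup>*" for x
    using descendant_of_idom_child_cut[OF that(2,1)] that idomD[OF idom]
    by (auto simp: below_def less_iff_rtrancl region_def)
  fix x assume x: "x \<in> {x \<in> V. (w, x) \<in> E\<^sup>*}"
  then show "(x \<in> below v - D - region w \<or> gam x = BE) \<longleftrightarrow> (x \<in> below w - region w \<or> gam x = BE)"
    using cut_iff by blast
  have "x \<notin> F1"
    using x assms(1) fresh by blast
  then show "x \<in> S \<inter> (below v - D - region w) \<union> (F1 \<union> F2) \<longleftrightarrow> x \<in> S \<inter> (below w - region w) \<union> F2"
    using x cut_iff by blast
next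
  fix x c assume "x \<in> {x \<in> V. (w, x) \<in> E\<^sup>*}" "(x, c) \<in> E"
  then show "c \<in> {x \<in> V. (w, x) \<in> E\<^sup>*}"
    using edges by auto
qed (use idomD[OF idom] in auto)

lemma edge_into_idom_child_region:
  assumes "(v, x) \<in> E\<^sup>*" "x \<notin> below v - D" "(x, c) \<in> E" "c \<in> region w"
  shows "c = w"
proof (rule ccontr)
  assume "c \<noteq> w"
  then have "(w, x) \<in> E\<^sup>*"
    using assms(3,4) dominates_parent by (auto simp: region_def)
  moreover have "x \<noteq> v"
    using calculation idomD[OF idom] rtrancl_antisym by blast
  ultimately show False
    using assms(1,2,3) edges fresh by (auto simp: below_def less_iff_rtrancl)
qed

lemma cut_sfun_subst_idom_child:
  fixes S F1 F2 :: "'v set"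
  assumes "F1 \<subseteq> D" "F2 \<subseteq> region w"
  defines "C \<equiv> below v - D"
    and "S' \<equiv> if cut_sfun E gam (below w - region w) (S \<inter> (below w - region w) \<union> F2) w
              then insert w S else S - {w}"
  shows "cut_sfun E gam (C - region w) (S \<inter> (C - region w) \<union> (F1 \<union> F2)) v \<longleftrightarrow>
    cut_sfun E gam C (S' \<inter> C \<union> F1) v"
proof (rule cut_sfun_local[where N = "{x \<in> V. (v, x) \<in> E\<^sup>*} - (region w - {w})" and K = "{w}",
      OF wf_converse_edges])
  have "v \<notin> region w"
    using idomD[OF idom] region_descendant rtrancl_antisym by blast
  then show "v \<in> {x \<in> V. (v, x) \<in> E\<^sup>*} - (region w - {w})"
    using idomD[OF idom] by simp
next
  fix x assume x: "x \<in> {x \<in> V. (v, x) \<in> E\<^sup>*} - (region w - {w})" "x \<notin> {w}"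
  then show "(x \<in> C - region w \<or> gam x = BE) \<longleftrightarrow> (x \<in> C \<or> gam x = BE)"
    by auto
  show "x \<in> S \<inter> (C - region w) \<union> (F1 \<union> F2) \<longleftrightarrow> x \<in> S' \<inter> C \<union> F1"
    using x assms(2) by (auto simp: S'_def)
next
  fix x c assume x: "x \<in> {x \<in> V. (v, x) \<in> E\<^sup>*} - (region w - {w})" "x \<notin> {w}" "x \<notin> C - region w"
    and c: "(x, c) \<in> E"
  then have "c \<notin> region w - {w}"
    using edge_into_idom_child_region[of x c] by (auto simp: C_def)
  then show "c \<in> {x \<in> V. (v, x) \<in> E\<^sup>*} - (region w - {w})"
    using x c edges by (auto intro: rtrancl_into_rtrancl)
next
  fix x assume "x \<in> {x \<in> V. (v, x) \<in> E\<^sup>*} - (region w - {w})" "x \<in> {w}"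
  then have "x = w" by simp
  have "w \<in> C" "w \<notin> F1"
    using descendant_of_idom_child_cut[of w] idomD[OF idom] fresh assms(1) by (auto simp: C_def)
  then have "cut_sfun E gam C (S' \<inter> C \<union> F1) w \<longleftrightarrow>
      cut_sfun E gam (below w - region w) (S \<inter> (below w - region w) \<union> F2) w"
    by (subst cut_sfun_iff) (simp add: S'_def)
  then show "cut_sfun E gam (C - region w) (S \<inter> (C - region w) \<union> (F1 \<union> F2)) x \<longleftrightarrow>
      cut_sfun E gam C (S' \<inter> C \<union> F1) x"
    using cut_sfun_at_idom_child[OF assms(1,2)] \<open>x = w\<close> by (simp add: C_def)
qed

lemma represents_subst:
  assumes a: "represents D v a" and b: "represents (region w) w b"
  shows "represents (D \<union> region w) v (sfp_subst a w b)"
proof -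
  let ?B = "BEs V gam"
  let ?C = "below v - D"
  let ?bw = "\<lambda>S F2. cut_sfun E gam (below w - region w) (S \<inter> (below w - region w) \<union> F2) w"
  let ?c = "\<lambda>S F1. of_bool (cut_sfun E gam ?C (S \<inter> ?C \<union> F1) v)"
  have disjoint: "(D \<inter> ?B) \<inter> (region w \<inter> ?B) = {}"
    using fresh region_descendant by blast
  have diff: "below v - (D \<union> region w) = ?C - region w"
    by blast
  have "sfp_eval (sfp_subst a w b) S = bernoulli_expectation p ((D \<union> region w) \<inter> ?B)
      (\<lambda>F. of_bool (cut_sfun E gam (?C - region w) (S \<inter> (?C - region w) \<union> F) v))"
    if "finite S" for S
  proof -
    let ?q = "sfp_eval b S"
    have q: "?q = bernoulli_expectation p (region w \<inter> ?B) (\<lambda>F2. of_bool (?bw S F2))"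
      using b \<open>finite S\<close> by (simp add: represents_def)
    have "bernoulli_expectation p ((D \<union> region w) \<inter> ?B)
        (\<lambda>F. of_bool (cut_sfun E gam (?C - region w) (S \<inter> (?C - region w) \<union> F) v)) =
      bernoulli_expectation p (D \<inter> ?B) (\<lambda>F1. bernoulli_expectation p (region w \<inter> ?B)
        (\<lambda>F2. of_bool (cut_sfun E gam (?C - region w) (S \<inter> (?C - region w) \<union> (F1 \<union> F2)) v)))"
      using bernoulli_expectation_Un[OF finite_BEs finite_BEs disjoint]
      by (simp add: Int_Un_distrib2)
    also have "\<dots> = bernoulli_expectation p (D \<inter> ?B) (\<lambda>F1. bernoulli_expectation p (region w \<inter> ?B)
        (\<lambda>F2. if ?bw S F2 then ?c (insert w S) F1 else ?c (S - {w}) F1))"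
      using cut_sfun_subst_idom_child
      by (intro bernoulli_expectation_cong) (auto simp: insert_Diff_if Int_insert_left)
    also have "\<dots> = bernoulli_expectation p (D \<inter> ?B)
        (\<lambda>F1. ?q * ?c (insert w S) F1 + (1 - ?q) * ?c (S - {w}) F1)"
      unfolding q by (simp add: bernoulli_expectation_if[OF finite_BEs])
    also have "\<dots> = ?q * sfp_eval a (insert w S) + (1 - ?q) * sfp_eval a (S - {w})"
      using a \<open>finite S\<close> by (simp add: bernoulli_expectation_linear represents_def)
    finally show ?thesis
      using \<open>finite S\<close> by (simp add: sfp_eval_subst)
  qed
  then show ?thesis
    using a by (simp add: represents_def sfp_finitary_subst diff)
qed

end

lemma represents_idom_children:
  assumes "gam v \<noteq> BE" "represents (\<Union> (region ` {w \<in> V. is_idom E R v w})) v a"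
  shows "represents (region v) v a"
proof -
  have "region v - {v} = {u. dominates E R v u}"
    using dominatesD(2,4) by (auto simp: region_def)
  then have dominated: "\<Union> (region ` {w \<in> V. is_idom E R v w}) = region v - {v}"
    using Union_region_idom_children by simp
  have "below v - (region v - {v}) = below v - region v"
    by (auto simp: below_def less_iff_rtrancl)
  moreover have "(region v - {v}) \<inter> BEs V gam = region v \<inter> BEs V gam"
    using assms(1) by (auto simp: BEs_def)
  ultimately show ?thesis
    using assms(2) unfolding dominated by (simp add: represents_def)
qed

lemma represents_foldl_subst:
  assumes "represents {} v a"
    and "distinct ws" "set ws \<subseteq> {w \<in> V. is_idom E R v w}"
    and "sorted_wrt (\<lambda>w w'. \<not> less E w w') ws"
    and "\<And>w. w \<in> set ws \<Longrightarrow> represents (region w) w (g w)"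
  shows "represents (\<Union> (region ` set ws)) v (foldl (\<lambda>a w. sfp_subst a w (g w)) a ws)"
  using assms(2-5)
proof (induction ws rule: rev_induct)
  case Nil
  then show ?case using assms(1) by simp
next
  case (snoc w ws)
  have idom: "is_idom E R v w"
    using snoc.prems(2) by simp
  have "u \<notin> \<Union> (region ` set ws)" if "(w, u) \<in> E\<^sup>*" for u
    using idom_sibling_region_not_below[OF _ idom _ _ _ that] snoc.prems
    by (auto simp: sorted_wrt_append)
  with idom have "represents (\<Union> (region ` set ws) \<union> region w) v
      (sfp_subst (foldl (\<lambda>a w. sfp_subst a w (g w)) a ws) w (g w))"
    using snoc by (intro represents_subst) (auto simp: sorted_wrt_append)
  moreover have "\<Union> (region ` set (ws @ [w])) = \<Union> (region ` set ws) \<union> region w"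
    by auto
  ultimately show ?case
    by simp
qed

lemma represents_sfpa_step:
  assumes "v \<in> V" "sfpa_inner_ok V E R ws"
    and "\<And>w. is_idom E R v w \<Longrightarrow> represents (region w) w (g w)"
  shows "represents (region v) v (sfpa_step E gam p ws g v)"
proof (cases "gam v = BE")
  case True
  then show ?thesis
    using represents_BE assms(1) by (simp add: sfpa_step_def)
next
  case False
  have ws: "distinct (ws v)" "set (ws v) = {w \<in> V. is_idom E R v w}"
    "sorted_wrt (\<lambda>w w'. \<not> less E w w') (ws v)"
    using assms(1,2) by (auto simp: sfpa_inner_ok_def intro!: sorted_wrt_if_nth_drop)
  have "represents (\<Union> (region ` set (ws v))) v
      (foldl (\<lambda>a w. sfp_subst a w (g w)) (sfpa_init E gam v) (ws v))"
    by (rule represents_foldl_subst[OF represents_init[OF assms(1) False]]) (use ws assms(3) in auto)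
  then show ?thesis
    using represents_idom_children[OF False] False by (simp add: sfpa_step_def ws(2))
qed

lemma sfpa_run_snoc:
  "sfpa_run E gam p ws (vs @ [v]) =
    (sfpa_run E gam p ws vs)(v := sfpa_step E gam p ws (sfpa_run E gam p ws vs) v)"
  by (simp add: sfpa_run_def)

lemma represents_sfpa_run:
  assumes "sfpa_inner_ok V E R ws"
    and "set vs \<subseteq> V" "sorted_wrt (\<lambda>v v'. \<not> less E v' v) vs"
    and "\<And>v u. v \<in> set vs \<Longrightarrow> less E u v \<Longrightarrow> u \<in> set vs"
  shows "\<forall>u \<in> set vs. represents (region u) u (sfpa_run E gam p ws vs u)"
  using assms(2-4)
proof (induction vs rule: rev_induct)
  case (snoc v vs)
  let ?g = "sfpa_run E gam p ws vs"
  have "\<not> less E v x" if "x \<in> set vs" for x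
    using snoc.prems(2) that by (simp add: sorted_wrt_append)
  then have "u \<in> set vs" if "x \<in> set vs" "less E u x" for x u
    using snoc.prems(3)[of x u] that by auto
  then have IH: "\<forall>u \<in> set vs. represents (region u) u (?g u)"
    using snoc by (simp add: sorted_wrt_append)
  have "represents (region w) w (?g w)" if "is_idom E R v w" for w
  proof -
    have "less E w v"
      using idomD[OF that] by (auto simp: less_iff_rtrancl)
    then have "w \<in> set vs"
      using snoc.prems(3)[of v w] by (auto simp: less_iff_rtrancl)
    then show ?thesis
      using IH by blast
  qed
  then have "represents (region v) v (sfpa_step E gam p ws ?g v)"
    using represents_sfpa_step[OF _ assms(1)] snoc.prems(1) by simp
  then show ?case
    using IH by (simp add: sfpa_run_snoc)
qed simp

lemma represents_root_eq_unreliability: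
  assumes "represents (region R) R a"
  shows "a = sfp_const (unreliability V E R gam p)"
proof (rule sfp_eqI)
  show "sfp_finitary a"
    using assms by (simp add: represents_def)
  show "sfp_finitary (sfp_const (unreliability V E R gam p))"
    by (rule sfp_finitary_const)
next
  fix S :: "'v set"
  assume "finite S"
  have no_cut: "below R - region R = {}" and "region R \<inter> BEs V gam = BEs V gam"
    using region_root by (auto simp: below_def BEs_def)
  then have "sfp_eval a S = bernoulli_expectation p (BEs V gam) (\<lambda>F. of_bool (cut_sfun E gam {} F R))"
    using assms \<open>finite S\<close> unfolding represents_def no_cut by simp
  also have "\<dots> = unreliability V E R gam p"
    unfolding unreliability_def
    using prob_Pi_bernoulli[of "BEs V gam" p] finite_BEs[of UNIV] prob_BE
    by (simp add: BEs_def sfun_iff_cut_sfun)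
  finally show "sfp_eval a S = sfp_eval (sfp_const (unreliability V E R gam p)) S"
    using \<open>finite S\<close> by (simp add: sfp_eval_const)
qed

end

lemma fault_tree_model_if_fault_tree:
  "fault_tree V E R gam p \<Longrightarrow> fault_tree_model V E R gam p"
  by (auto simp: fault_tree_def fault_tree_model_def fault_tree_model_axioms_def rooted_dag_def)

theorem theorem21:
  fixes V :: "'v set" and E :: "('v \<times> 'v) set" and R :: 'v
    and gam :: "'v \<Rightarrow> gate" and p :: "'v \<Rightarrow> real"
    and vs :: "'v list" and ws :: "'v \<Rightarrow> 'v list"
  assumes "fault_tree V E R gam p"
    and "sfpa_outer_ok V E vs"
    and "sfpa_inner_ok V E R ws"
  shows "sfpa_run E gam p ws vs R = sfp_const (unreliability V E R gam p)"
proof -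
  interpret fault_tree_model V E R gam p
    using assms(1) by (rule fault_tree_model_if_fault_tree)
  have "set vs = V" "sorted_wrt (\<lambda>v v'. \<not> less E v' v) vs"
    using assms(2) by (auto simp: sfpa_outer_ok_def intro!: sorted_wrt_if_nth_drop)
  moreover have "u \<in> V" if "less E u v" for u v
    using that trancl_in_V by (auto simp: less_iff_rtrancl rtrancl_eq_or_trancl)
  ultimately have "represents (region R) R (sfpa_run E gam p ws vs R)"
    using represents_sfpa_run[OF assms(3)] root by auto
  then show ?thesis
    by (rule represents_root_eq_unreliability)
qed

end
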